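(* Let $G$ be a non-complete double-critical $k$-chromatic graph. Then every vertex of $G$ has at least $k+1$ neighbours.
   Context: All graphs are finite and simple. A graph $G$ is (vertex-)critical if $\chi(G-v)<\chi(G)$ for every vertex $v\in V(G)$. A critical graph $G$ is double-critical if $\chi(G-x-y)\le\chi(G)-2$ for every edge $xy\in E(G)$. *)

theory Defs
  imports Main
begin

definition simple_graph :: "'a set \<Rightarrow> 'a set set \<Rightarrow> bool" where
  "simple_graph V E \<longleftrightarrow> finite V \<and> (\<forall>e\<in>E. \<exists>u v. u \<in> V \<and> v \<in> V \<and> u \<noteq> v \<and> e = {u, v})"

definition colouring :: "'a set \<Rightarrow> 'a set set \<Rightarrow> nat \<Rightarrow> ('a \<Rightarrow> nat) \<Rightarrow> bool" where
  "colouring V E k c \<longleftrightarrow> (\<forall>x\<in>V. c x < k) \<and> (\<forall>u v. {u, v} \<in> E \<longrightarrow> c u \<noteq> c v)"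

definition colourable :: "'a set \<Rightarrow> 'a set set \<Rightarrow> nat \<Rightarrow> bool" where
  "colourable V E k \<longleftrightarrow> (\<exists>c. colouring V E k c)"

definition chromatic_number :: "'a set \<Rightarrow> 'a set set \<Rightarrow> nat" where
  "chromatic_number V E = (LEAST k. colourable V E k)"

definition del_vertices :: "'a set \<Rightarrow> 'a set set \<Rightarrow> 'a set \<Rightarrow> 'a set set" where
  "del_vertices V E S = {e \<in> E. e \<subseteq> V - S}"

definition critical :: "'a set \<Rightarrow> 'a set set \<Rightarrow> bool" where
  "critical V E \<longleftrightarrow> (\<forall>v\<in>V. chromatic_number (V - {v}) (del_vertices V E {v}) < chromatic_number V E)"

definition double_critical :: "'a set \<Rightarrow> 'a set set \<Rightarrow> bool" where
  "double_critical V E \<longleftrightarrow> critical V E \<and>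
     (\<forall>x y. {x, y} \<in> E \<longrightarrow>
        chromatic_number (V - {x, y}) (del_vertices V E {x, y}) + 2 \<le> chromatic_number V E)"

definition complete_graph :: "'a set \<Rightarrow> 'a set set \<Rightarrow> bool" where
  "complete_graph V E \<longleftrightarrow> (\<forall>u\<in>V. \<forall>v\<in>V. u \<noteq> v \<longrightarrow> {u, v} \<in> E)"

definition neighbours :: "'a set \<Rightarrow> 'a set set \<Rightarrow> 'a \<Rightarrow> 'a set" where
  "neighbours V E v = {u \<in> V. {u, v} \<in> E}"

end

theory Submission
  imports Defs
begin

text \<open>Let \<open>x\<close> be a vertex and \<open>k = \<chi>(G)\<close>. Criticality gives \<open>deg x \<ge> k - 1\<close>, so if the
  neighbourhood of \<open>x\<close> were a clique, \<open>x\<close> would lie in a \<open>k\<close>-clique, and a critical graph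
  containing a \<open>k\<close>-clique is that clique, i.e. complete. Otherwise \<open>x\<close> has two non-adjacent
  neighbours \<open>y, y'\<close>. In any \<open>(k-2)\<close>-colouring of \<open>G - x - y\<close> every colour class meets the
  common neighbourhood of \<open>x\<close> and \<open>y\<close> (else recolour to get a \<open>(k-1)\<close>-colouring of \<open>G\<close>);
  in particular some common neighbour \<open>z\<close> of \<open>x, y\<close> has the colour of \<open>y'\<close>, so \<open>z\<close> and \<open>y'\<close>
  are not adjacent. For the same reason \<open>x\<close> and \<open>y'\<close> have at least \<open>k - 2\<close> common
  neighbours, none of which is \<open>y\<close>, \<open>z\<close> or \<open>y'\<close>; hence \<open>deg x \<ge> k + 1\<close>.\<close>

definition clique :: "'a set set \<Rightarrow> 'a set \<Rightarrow> bool" where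
  "clique E C \<longleftrightarrow> (\<forall>u\<in>C. \<forall>v\<in>C. u \<noteq> v \<longrightarrow> {u, v} \<in> E)"

lemma simple_graph_edgeD:
  assumes "simple_graph V E" "{u, v} \<in> E"
  shows "u \<in> V" "v \<in> V" "u \<noteq> v"
proof -
  obtain a b where "a \<in> V" "b \<in> V" "a \<noteq> b" "{u, v} = {a, b}"
    using assms unfolding simple_graph_def by blast
  then show "u \<in> V" "v \<in> V" "u \<noteq> v"
    by (auto simp: doubleton_eq_iff)
qed

lemma simple_graph_del_vertices:
  "simple_graph V E \<Longrightarrow> simple_graph (V - S) (del_vertices V E S)"
  unfolding simple_graph_def del_vertices_def by fastforce

lemma finite_neighbours: "simple_graph V E \<Longrightarrow> finite (neighbours V E x)"
  by (simp add: simple_graph_def neighbours_def)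

lemma not_in_neighbours_self: "simple_graph V E \<Longrightarrow> x \<notin> neighbours V E x"
  using simple_graph_edgeD(3)[of V E x x] by (auto simp: neighbours_def)

lemma in_neighbours_iff: "simple_graph V E \<Longrightarrow> u \<in> neighbours V E v \<longleftrightarrow> {u, v} \<in> E"
  using simple_graph_edgeD by (auto simp: neighbours_def)

lemma colourable_card:
  assumes G: "simple_graph V E"
  shows "colourable V E (card V)"
proof -
  obtain h where h: "bij_betw h V {0..<card V}"
    using ex_bij_betw_finite_nat G by (auto simp: simple_graph_def)
  have "colouring V E (card V) h"
    unfolding colouring_def
  proof (intro conjI allI impI ballI)
    fix w assume "w \<in> V"
    then show "h w < card V"
      using h by (auto simp: bij_betw_def)
  next
    fix u v assume "{u, v} \<in> E"
    then show "h u \<noteq> h v"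
      using h simple_graph_edgeD[OF G \<open>{u, v} \<in> E\<close>] by (auto simp: bij_betw_def inj_on_def)
  qed
  then show ?thesis
    by (auto simp: colourable_def)
qed

lemma colouring_chromatic_number:
  "simple_graph V E \<Longrightarrow> \<exists>c. colouring V E (chromatic_number V E) c"
  using LeastI[of "colourable V E", OF colourable_card]
  by (simp add: chromatic_number_def colourable_def)

lemma chromatic_number_le: "colouring V E m c \<Longrightarrow> chromatic_number V E \<le> m"
  unfolding chromatic_number_def by (rule Least_le) (auto simp: colourable_def)

lemma colouring_mono: "colouring V E m c \<Longrightarrow> m \<le> m' \<Longrightarrow> colouring V E m' c"
  unfolding colouring_def by auto

lemma card_clique_le_colours:
  assumes "colouring V E m c" "C \<subseteq> V" "clique E C"
  shows "card C \<le> m"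
proof -
  have "inj_on c C"
    using assms unfolding colouring_def clique_def inj_on_def by blast
  moreover have "c ` C \<subseteq> {..<m}"
    using assms unfolding colouring_def by auto
  ultimately show ?thesis
    using card_inj_on_le by (metis card_lessThan finite_lessThan)
qed

lemma card_clique_le_chromatic_number:
  assumes "simple_graph V E" "C \<subseteq> V" "clique E C"
  shows "card C \<le> chromatic_number V E"
proof -
  obtain c where "colouring V E (chromatic_number V E) c"
    using colouring_chromatic_number[OF assms(1)] by blast
  then show ?thesis
    using card_clique_le_colours assms(2,3) by blast
qed

text \<open>Colour \<open>x\<close> with one of \<open>deg x + 1\<close> colours not used on its neighbourhood.\<close>
lemma colouring_extend_vertex:
  assumes G: "simple_graph V E"
    and c: "colouring (V - {x}) (del_vertices V E {x}) m c"
  shows "\<exists>c'. colouring V E (max m (card (neighbours V E x) + 1)) c'"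
proof -
  let ?N = "neighbours V E x"
  have "card (c ` ?N) < card {..card ?N}"
    using card_image_le[OF finite_neighbours[OF G, of x], of c] by simp
  then have "\<not> {..card ?N} \<subseteq> c ` ?N"
    using card_mono[OF finite_imageI[OF finite_neighbours[OF G, of x]]] by fastforce
  then obtain a where a: "a \<le> card ?N" "a \<notin> c ` ?N"
    by auto
  have "colouring V E (max m (card ?N + 1)) (c(x := a))"
    unfolding colouring_def
  proof (intro conjI allI impI ballI)
    fix w assume "w \<in> V"
    then show "(c(x := a)) w < max m (card ?N + 1)"
      using c a by (auto simp: colouring_def less_max_iff_disj)
  next
    fix u v assume e: "{u, v} \<in> E"
    note uv = simple_graph_edgeD[OF G e]
    have "u \<in> ?N" if "v = x" using e uv that by (auto simp: neighbours_def)
    moreover have "v \<in> ?N" if "u = x" using e uv that by (auto simp: neighbours_def insert_commute)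
    moreover have "c u \<noteq> c v" if "u \<noteq> x" "v \<noteq> x"
      using c e uv that by (auto simp: colouring_def del_vertices_def)
    ultimately show "(c(x := a)) u \<noteq> (c(x := a)) v"
      using a uv(3) by auto
  qed
  then show ?thesis
    by blast
qed

lemma critical_chromatic_number_le_degree:
  assumes G: "simple_graph V E" and "critical V E" "x \<in> V"
  shows "chromatic_number V E \<le> card (neighbours V E x) + 1"
proof -
  let ?m = "chromatic_number (V - {x}) (del_vertices V E {x})"
  have "?m < chromatic_number V E"
    using assms by (simp add: critical_def)
  moreover obtain c' where "colouring V E (max ?m (card (neighbours V E x) + 1)) c'"
    using colouring_chromatic_number[OF simple_graph_del_vertices[OF G]]
      colouring_extend_vertex[OF G] by blast
  ultimately show ?thesis
    using chromatic_number_le by fastforce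
qed

lemma critical_clique_eq_vertices:
  assumes G: "simple_graph V E" and crit: "critical V E"
    and C: "C \<subseteq> V" "clique E C" "chromatic_number V E \<le> card C"
  shows "C = V"
proof (rule ccontr)
  assume "C \<noteq> V"
  then obtain v where v: "v \<in> V" "v \<notin> C"
    using C by blast
  have CV: "C \<subseteq> V - {v}"
    using C(1) v by blast
  then have "clique (del_vertices V E {v}) C"
    using C(2) unfolding clique_def del_vertices_def by blast
  then have "card C \<le> chromatic_number (V - {v}) (del_vertices V E {v})"
    using card_clique_le_chromatic_number[OF simple_graph_del_vertices[OF G] CV] by blast
  moreover have "chromatic_number (V - {v}) (del_vertices V E {v}) < chromatic_number V E"
    using crit v by (simp add: critical_def)
  ultimately show False
    using C by linarith
qed

lemma critical_neighbourhood_clique_imp_complete: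
  assumes G: "simple_graph V E" and crit: "critical V E"
    and x: "x \<in> V" and N: "clique E (neighbours V E x)"
  shows "complete_graph V E"
proof -
  let ?C = "insert x (neighbours V E x)"
  have CV: "?C \<subseteq> V"
    using x by (auto simp: neighbours_def)
  have "{u, v} \<in> E" if uv: "u \<in> ?C" "v \<in> ?C" "u \<noteq> v" for u v
  proof -
    consider "u = x" "v \<in> neighbours V E x" | "v = x" "u \<in> neighbours V E x"
      | "u \<in> neighbours V E x" "v \<in> neighbours V E x"
      using uv by blast
    then show ?thesis
    proof cases
      case 1
      then show ?thesis
        using in_neighbours_iff[OF G] by (metis insert_commute)
    next
      case 2
      then show ?thesis
        using in_neighbours_iff[OF G] by blast
    next
      case 3
      then show ?thesis
        using N uv(3) by (simp add: clique_def)
    qed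
  qed
  then have clique: "clique E ?C"
    by (simp add: clique_def)
  have "card ?C = card (neighbours V E x) + 1"
    using finite_neighbours[OF G] not_in_neighbours_self[OF G] by simp
  then have "chromatic_number V E \<le> card ?C"
    using critical_chromatic_number_le_degree[OF G crit x] by linarith
  then have "?C = V"
    by (rule critical_clique_eq_vertices[OF G crit CV clique])
  then show ?thesis
    using clique by (simp add: complete_graph_def clique_def)
qed

text \<open>If colour \<open>i\<close> avoided the common neighbourhood, then giving \<open>x\<close> colour \<open>i\<close> and giving
  \<open>y\<close> and all neighbours of \<open>x\<close> of colour \<open>i\<close> the new colour \<open>m\<close> would colour \<open>G\<close> with
  \<open>m + 1\<close> colours.\<close>
lemma colour_class_meets_common_neighbours:
  assumes G: "simple_graph V E"
    and \<phi>: "colouring (V - {x, y}) (del_vertices V E {x, y}) m \<phi>"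
    and \<chi>: "m + 1 < chromatic_number V E" and i: "i < m"
  shows "\<exists>z \<in> neighbours V E x \<inter> neighbours V E y. \<phi> z = i"
proof (rule ccontr)
  assume none: "\<not> ?thesis"
  define c where
    "c u = (if u = x then i else if u = y \<or> (u \<in> neighbours V E x \<and> \<phi> u = i) then m else \<phi> u)"
    for u
  have \<phi>_bound: "\<phi> w < m" if "w \<in> V - {x, y}" for w
    using \<phi> that by (simp add: colouring_def)
  have \<phi>_edge: "\<phi> u \<noteq> \<phi> v" if "{u, v} \<in> E" "u \<notin> {x, y}" "v \<notin> {x, y}" for u v
    using \<phi> that simple_graph_edgeD[OF G that(1)] by (auto simp: colouring_def del_vertices_def)
  have proper: "c u \<noteq> c v" if e: "{u, v} \<in> E" and v: "v \<notin> {x, y}" for u v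
  proof -
    note uv = simple_graph_edgeD[OF G e]
    have e': "{v, u} \<in> E"
      using e by (simp add: insert_commute)
    consider "u = x" | "u = y" "u \<noteq> x" | "u \<notin> {x, y}" by blast
    then show ?thesis
    proof cases
      case 1
      then have "v \<in> neighbours V E x"
        using e' in_neighbours_iff[OF G] by blast
      then show ?thesis
        using 1 v uv(3) i by (auto simp: c_def)
    next
      case 2
      then have "v \<in> neighbours V E y"
        using e' in_neighbours_iff[OF G] by blast
      then have "c v = \<phi> v"
        using 2 v none by (auto simp: c_def)
      then show ?thesis
        using 2 v uv \<phi>_bound[of v] by (simp add: c_def)
    next
      case 3
      then show ?thesis
        using v uv \<phi>_edge[OF e 3 v] \<phi>_bound[of u] \<phi>_bound[of v] by (auto simp: c_def)
    qed
  qed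
  have "colouring V E (m + 1) c"
    unfolding colouring_def
  proof (intro conjI allI impI ballI)
    fix w assume "w \<in> V"
    then show "c w < m + 1"
      using i \<phi>_bound[of w] by (auto simp: c_def)
  next
    fix u v assume e: "{u, v} \<in> E"
    show "c u \<noteq> c v"
    proof (cases "u \<in> {x, y} \<and> v \<in> {x, y}")
      case True
      then show ?thesis
        using simple_graph_edgeD(3)[OF G e] i by (auto simp: c_def)
    next
      case False
      moreover have "{v, u} \<in> E"
        using e by (simp add: insert_commute)
      ultimately show ?thesis
        using proper[OF e] proper[of v u] by metis
    qed
  qed
  then show False
    using \<chi> chromatic_number_le by fastforce
qed

lemma card_common_neighbours_ge:
  assumes G: "simple_graph V E"
    and \<phi>: "colouring (V - {x, y}) (del_vertices V E {x, y}) m \<phi>"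
    and \<chi>: "m + 1 < chromatic_number V E"
  shows "m \<le> card (neighbours V E x \<inter> neighbours V E y)"
proof -
  let ?CN = "neighbours V E x \<inter> neighbours V E y"
  have fin: "finite ?CN"
    using finite_neighbours[OF G, of x] by blast
  have "{..<m} \<subseteq> \<phi> ` ?CN"
  proof
    fix i assume "i \<in> {..<m}"
    then obtain z where "z \<in> ?CN" "\<phi> z = i"
      using colour_class_meets_common_neighbours[OF G \<phi> \<chi>] by auto
    then show "i \<in> \<phi> ` ?CN"
      by (rule rev_image_eqI[OF _ sym])
  qed
  then have "card {..<m} \<le> card (\<phi> ` ?CN)"
    using card_mono finite_imageI[OF fin] by blast
  also have "\<dots> \<le> card ?CN"
    using card_image_le[OF fin] by blast
  finally show ?thesis
    by simp
qed

lemma double_critical_edge_colouring: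
  assumes G: "simple_graph V E" and "double_critical V E" "{x, y} \<in> E"
  shows "2 \<le> chromatic_number V E"
    and "\<exists>\<phi>. colouring (V - {x, y}) (del_vertices V E {x, y}) (chromatic_number V E - 2) \<phi>"
proof -
  have le: "chromatic_number (V - {x, y}) (del_vertices V E {x, y}) + 2 \<le> chromatic_number V E"
    using assms by (simp add: double_critical_def)
  then show "2 \<le> chromatic_number V E"
    by simp
  obtain \<phi> where "colouring (V - {x, y}) (del_vertices V E {x, y})
      (chromatic_number (V - {x, y}) (del_vertices V E {x, y})) \<phi>"
    using colouring_chromatic_number[OF simple_graph_del_vertices[OF G]] by blast
  moreover have "chromatic_number (V - {x, y}) (del_vertices V E {x, y}) \<le> chromatic_number V E - 2"
    using le by linarith
  ultimately show "\<exists>\<phi>. colouring (V - {x, y}) (del_vertices V E {x, y}) (chromatic_number V E - 2) \<phi>"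
    using colouring_mono by blast
qed

lemma double_critical_card_neighbours_ge:
  assumes G: "simple_graph V E" and dc: "double_critical V E"
    and y: "y \<in> neighbours V E x" and y': "y' \<in> neighbours V E x"
    and yy': "y \<noteq> y'" "{y, y'} \<notin> E"
  shows "chromatic_number V E + 1 \<le> card (neighbours V E x)"
proof -
  let ?k = "chromatic_number V E"
  let ?N = "neighbours V E"
  have exy: "{x, y} \<in> E" and exy': "{x, y'} \<in> E"
    using y y' in_neighbours_iff[OF G] by (metis insert_commute)+
  obtain \<phi> where \<phi>: "colouring (V - {x, y}) (del_vertices V E {x, y}) (?k - 2) \<phi>"
    using double_critical_edge_colouring(2)[OF G dc exy] by blast
  obtain \<psi> where \<psi>: "colouring (V - {x, y'}) (del_vertices V E {x, y'}) (?k - 2) \<psi>"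
    using double_critical_edge_colouring(2)[OF G dc exy'] by blast
  have k: "?k - 2 + 1 < ?k"
    using double_critical_edge_colouring(1)[OF G dc exy] by linarith
  have y'V: "y' \<in> V - {x, y}"
    using y' yy'(1) not_in_neighbours_self[OF G, of x] by (auto simp: neighbours_def)
  then have "\<phi> y' < ?k - 2"
    using \<phi> by (simp add: colouring_def)
  then obtain z where z: "z \<in> ?N x" "z \<in> ?N y" "\<phi> z = \<phi> y'"
    using colour_class_meets_common_neighbours[OF G \<phi> k] by blast
  have zV: "z \<in> V - {x, y}"
    using z not_in_neighbours_self[OF G] by (auto simp: neighbours_def)
  have "{z, y'} \<notin> E"
  proof
    assume "{z, y'} \<in> E"
    then have "{z, y'} \<in> del_vertices V E {x, y}"
      using zV y'V by (simp add: del_vertices_def)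
    then show False
      using \<phi> z(3) by (simp add: colouring_def)
  qed
  then have disjoint: "{y, z, y'} \<inter> (?N x \<inter> ?N y') = {}"
    using yy'(2) not_in_neighbours_self[OF G] in_neighbours_iff[OF G] by blast
  have "y' \<notin> ?N y"
    using yy'(2) in_neighbours_iff[OF G] by (metis insert_commute)
  then have "z \<noteq> y" "z \<noteq> y'"
    using z(2) not_in_neighbours_self[OF G, of y] by auto
  then have "card {y, z, y'} = 3"
    using yy'(1) by simp
  then have "card ({y, z, y'} \<union> (?N x \<inter> ?N y')) = 3 + card (?N x \<inter> ?N y')"
    using disjoint card_Un_disjoint finite_neighbours[OF G, of x]
    by (metis finite.emptyI finite.insertI finite_Int)
  moreover have "{y, z, y'} \<union> (?N x \<inter> ?N y') \<subseteq> ?N x"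
    using y y' z(1) by blast
  ultimately have "3 + card (?N x \<inter> ?N y') \<le> card (?N x)"
    using card_mono[OF finite_neighbours[OF G, of x]] by metis
  then show ?thesis
    using card_common_neighbours_ge[OF G \<psi> k] k by linarith
qed

theorem proposition11:
  fixes V :: "'a set" and E :: "'a set set" and k :: nat
  assumes "simple_graph V E"
    and "double_critical V E"
    and "chromatic_number V E = k"
    and "\<not> complete_graph V E"
  shows "\<forall>v\<in>V. card (neighbours V E v) \<ge> k + 1"
proof
  fix x assume x: "x \<in> V"
  have "critical V E"
    using assms(2) by (simp add: double_critical_def)
  then have "\<not> clique E (neighbours V E x)"
    using critical_neighbourhood_clique_imp_complete[OF assms(1) _ x] assms(4) by blast
  then obtain y y' where "y \<in> neighbours V E x" "y' \<in> neighbours V E x" "y \<noteq> y'" "{y, y'} \<notin> E"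
    unfolding clique_def by blast
  from double_critical_card_neighbours_ge[OF assms(1,2) this]
  show "card (neighbours V E x) \<ge> k + 1"
    using assms(3) by simp
qed

end
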